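(* Let $s$ be a continuous proper scoring rule with convex exposure on an $n$-outcome forecast domain $\mathcal{D}$, with expected reward function $G$ and exposure function $\mathbf{g}$. Fix forecasts $\mathbf{p}_1,\dots,\mathbf{p}_m\in\mathcal{D}$ and non-negative weights $w_1,\dots,w_m$ with $\sum_i w_i=1$. For $\mathbf{p}\in\mathcal{D}$ and $j\in[n]$ define \[u(\mathbf{p};j):=s(\mathbf{p};j)-\sum_{i=1}^m w_i\, s(\mathbf{p}_i;j).\] Let $\mathbf{p}^*\in\mathcal{D}$ be the quasi-arithmetic pool of $(\mathbf{p}_i,w_i)_{i=1}^m$ with respect to $\mathbf{g}$. Then the quantity $\min_{j\in[n]} u(\mathbf{p};j)$, as a function of $\mathbf{p}\in\mathcal{D}$, is uniquely maximized at $\mathbf{p}=\mathbf{p}^*$. Furthermore, $u(\mathbf{p}^*;j)$ is the same for all $j\in[n]$; this common value is non-negative, and it is positive unless all forecasts $\mathbf{p}_i$ with $w_i>0$ are equal.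
   Context: $\Delta^n\subseteq\mathbb{R}^n$ is the standard probability simplex with vertices $\delta_1,\dots,\delta_n$ ($\delta_j$ the $j$-th standard basis vector). An $n$-outcome forecast domain is a convex subset of $\Delta^n$ of dimension $n-1$ (containing a subset homeomorphic to $\mathbb{R}^{n-1}$). A proper scoring rule on $\mathcal{D}$ is a function $s:\mathcal{D}\times[n]\to\mathbb{R}$ such that for all $\mathbf{p}\in\mathcal{D}$, $\sum_j p(j)s(\mathbf{p};j)\ge\sum_j p(j)s(\mathbf{x};j)$ for all $\mathbf{x}\in\mathcal{D}$, with equality only when $\mathbf{x}=\mathbf{p}$. Its expected reward function is $G(\mathbf{p}):=\sum_j p(j)s(\mathbf{p};j)$; for continuous $s$, $G$ is differentiable and strictly convex, and $s(\mathbf{p};j)=G(\mathbf{p})+\langle\mathbf{g}(\mathbf{p}),\delta_j-\mathbf{p}\rangle$, where $\mathbf{g}=\nabla G$ is called the exposure function. Values of $\mathbf{g}$ are understood modulo translation by the all-ones vector $\mathbf{1}_n$ (equivalently, projected onto $\{\mathbf{x}:\sum_i x_i=0\}$). $s$ has convex exposure if the range of $\mathbf{g}$ is a convex set. The quasi-arithmetic (QA) pool of $(\mathbf{p}_i,w_i)$ with respect to $\mathbf{g}$ is the unique $\mathbf{p}^*\in\mathcal{D}$ with $\mathbf{g}(\mathbf{p}^* )=\sum_i w_i\mathbf{g}(\mathbf{p}_i)$ (equality modulo translation by $\mathbf{1}_n$); it exists by convex exposure. *)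

theory Defs
  imports "HOL-Analysis.Analysis"
begin

text \<open>Outcomes are indexed by a finite type 'n (so n = CARD('n)); forecasts are
  vectors in real^'n.  delta j is the j-th standard basis vector.\<close>

definition delta :: "'n::finite \<Rightarrow> real^'n" where
  "delta j = axis j 1"

definition prob_simplex :: "(real^'n::finite) set" where
  "prob_simplex = {p. (\<forall>j. 0 \<le> p $ j) \<and> (\<Sum>j\<in>UNIV. p $ j) = 1}"

definition forecast_domain :: "(real^'n::finite) set \<Rightarrow> bool" where
  "forecast_domain D \<longleftrightarrow> D \<subseteq> prob_simplex \<and> convex D \<and> aff_dim D = int CARD('n) - 1"

definition proper_scoring_rule :: "(real^'n::finite) set \<Rightarrow> (real^'n \<Rightarrow> 'n \<Rightarrow> real) \<Rightarrow> bool" where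
  "proper_scoring_rule D s \<longleftrightarrow>
     (\<forall>p\<in>D. \<forall>x\<in>D. (\<Sum>j\<in>UNIV. p $ j * s p j) \<ge> (\<Sum>j\<in>UNIV. p $ j * s x j)
        \<and> ((\<Sum>j\<in>UNIV. p $ j * s p j) = (\<Sum>j\<in>UNIV. p $ j * s x j) \<longrightarrow> x = p))"

definition continuous_scoring_rule :: "(real^'n::finite) set \<Rightarrow> (real^'n \<Rightarrow> 'n \<Rightarrow> real) \<Rightarrow> bool" where
  "continuous_scoring_rule D s \<longleftrightarrow> (\<forall>j. continuous_on D (\<lambda>p. s p j))"

definition expected_reward :: "(real^'n::finite \<Rightarrow> 'n \<Rightarrow> real) \<Rightarrow> real^'n \<Rightarrow> real" where
  "expected_reward s p = (\<Sum>j\<in>UNIV. p $ j * s p j)"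

text \<open>Exposure function: g = grad G (derivative of G relative to D, since G lives on D),
  together with the representation s(p;j) = G(p) + <g(p), delta_j - p> stated in the context.
  Both determine g only modulo the all-ones vector.\<close>
definition exposure_function ::
  "(real^'n::finite) set \<Rightarrow> (real^'n \<Rightarrow> 'n \<Rightarrow> real) \<Rightarrow> (real^'n \<Rightarrow> real^'n) \<Rightarrow> bool" where
  "exposure_function D s g \<longleftrightarrow>
     (\<forall>p\<in>D. (expected_reward s has_derivative (\<lambda>v. g p \<bullet> v)) (at p within D)) \<and>
     (\<forall>p\<in>D. \<forall>j. s p j = expected_reward s p + g p \<bullet> (delta j - p))"

text \<open>Projection onto the hyperplane {x. sum_i x_i = 0} (quotient by translation by 1).\<close>
definition proj0 :: "real^'n::finite \<Rightarrow> real^'n" where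
  "proj0 x = x - ((\<Sum>i\<in>UNIV. x $ i) / real CARD('n)) *\<^sub>R (1::real^'n)"

definition convex_exposure ::
  "(real^'n::finite) set \<Rightarrow> (real^'n \<Rightarrow> real^'n) \<Rightarrow> bool" where
  "convex_exposure D g \<longleftrightarrow> convex (proj0 ` g ` D)"

definition qa_pool ::
  "(real^'n::finite) set \<Rightarrow> (real^'n \<Rightarrow> real^'n) \<Rightarrow> nat \<Rightarrow> (nat \<Rightarrow> real^'n) \<Rightarrow> (nat \<Rightarrow> real) \<Rightarrow> real^'n \<Rightarrow> bool" where
  "qa_pool D g m P w pstar \<longleftrightarrow> pstar \<in> D \<and>
     (\<exists>c::real. g pstar = (\<Sum>i<m. w i *\<^sub>R g (P i)) + c *\<^sub>R (1::real^'n))"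

end

theory Submission
  imports Defs
begin

text \<open>By the exposure representation, the score of a forecast p on outcome j is
  an outcome-independent term plus the j-th coordinate of g(p).  Since g at the
  QA pool p* is the weighted average of the g(p_i) up to a multiple of the
  all-ones vector, the outcome-dependent parts cancel in u(p*; j), which is
  therefore a constant K.  Taking the expectation under p*, K is the amount by
  which p* beats the p_i in expected score under p* itself, so K is non-negative
  by properness, and positive if some p_i with positive weight differs from p*.
  For any other p, the minimum of u(p; -) is at most its expectation under p*,
  which by strict properness is less than K.\<close>

definition expected_score :: "(real^'n::finite \<Rightarrow> 'n \<Rightarrow> real) \<Rightarrow> real^'n \<Rightarrow> real^'n \<Rightarrow> real" where
  "expected_score s p x = (\<Sum>j\<in>UNIV. p $ j * s x j)"

lemma proper_scoring_rule_le:
  assumes "proper_scoring_rule D s" "p \<in> D" "x \<in> D"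
  shows "expected_score s p x \<le> expected_score s p p"
  using assms unfolding proper_scoring_rule_def expected_score_def by blast

lemma proper_scoring_rule_less:
  assumes "proper_scoring_rule D s" "p \<in> D" "x \<in> D" "x \<noteq> p"
  shows "expected_score s p x < expected_score s p p"
proof -
  have "expected_score s p x \<noteq> expected_score s p p"
    using assms unfolding proper_scoring_rule_def expected_score_def by metis
  then show ?thesis
    using proper_scoring_rule_le[OF assms(1-3)] by linarith
qed

lemma prob_simplex_sum_const:
  assumes "q \<in> prob_simplex"
  shows "(\<Sum>j\<in>UNIV. q $ j * c) = c"
  using assms unfolding prob_simplex_def by (simp add: sum_distrib_right[symmetric])

lemma Min_range_le_expectation:
  fixes f :: "'n::finite \<Rightarrow> real"
  assumes "q \<in> prob_simplex"
  shows "Min (range f) \<le> (\<Sum>j\<in>UNIV. q $ j * f j)"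
proof -
  have "Min (range f) = (\<Sum>j\<in>UNIV. q $ j * Min (range f))"
    using prob_simplex_sum_const[OF assms] by simp
  also have "\<dots> \<le> (\<Sum>j\<in>UNIV. q $ j * f j)"
    using assms unfolding prob_simplex_def by (intro sum_mono mult_left_mono) auto
  finally show ?thesis .
qed

lemma expected_score_pool_gap:
  "(\<Sum>j\<in>UNIV. q $ j * (s x j - (\<Sum>i<m. w i * s (P i) j)))
     = expected_score s q x - (\<Sum>i<m. w i * expected_score s q (P i))"
  unfolding expected_score_def
  by (simp add: right_diff_distrib sum_subtractf sum_distrib_left algebra_simps sum.swap[of _ UNIV])

lemma weighted_expected_score_le:
  assumes "proper_scoring_rule D s" "q \<in> D" "\<forall>i<m. P i \<in> D"
    and "\<forall>i<m. 0 \<le> w i" "(\<Sum>i<m. w i) = 1"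
  shows "(\<Sum>i<m. w i * expected_score s q (P i)) \<le> expected_score s q q"
proof -
  have "(\<Sum>i<m. w i * expected_score s q (P i)) \<le> (\<Sum>i<m. w i * expected_score s q q)"
    using assms(3,4) proper_scoring_rule_le[OF assms(1,2)] by (intro sum_mono mult_left_mono) auto
  also have "\<dots> = expected_score s q q"
    using assms(5) by (simp add: sum_distrib_right[symmetric])
  finally show ?thesis .
qed

lemma weighted_expected_score_less:
  fixes m :: nat
  assumes "proper_scoring_rule D s" "q \<in> D" "\<forall>i<m. P i \<in> D"
    and "\<forall>i<m. 0 \<le> w i" "(\<Sum>i<m. w i) = 1"
    and "k < m" "0 < w k" "P k \<noteq> q"
  shows "(\<Sum>i<m. w i * expected_score s q (P i)) < expected_score s q q"
proof -
  have "\<forall>i\<in>{..<m}. w i * expected_score s q (P i) \<le> w i * expected_score s q q"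
    using assms(3,4) proper_scoring_rule_le[OF assms(1,2)] by (auto intro: mult_left_mono)
  moreover have "w k * expected_score s q (P k) < w k * expected_score s q q"
    using assms(3,6-8) proper_scoring_rule_less[OF assms(1,2)] by simp
  then have "\<exists>i\<in>{..<m}. w i * expected_score s q (P i) < w i * expected_score s q q"
    using assms(6) by blast
  ultimately have "(\<Sum>i<m. w i * expected_score s q (P i)) < (\<Sum>i<m. w i * expected_score s q q)"
    by (rule sum_strict_mono_ex1[OF finite_lessThan])
  also have "\<dots> = expected_score s q q"
    using assms(5) by (simp add: sum_distrib_right[symmetric])
  finally show ?thesis .
qed

lemma exposure_score_eq:
  assumes "exposure_function D s g" "p \<in> D"
  shows "s p j = expected_reward s p - g p \<bullet> p + g p $ j"
  using assms unfolding exposure_function_def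
  by (simp add: delta_def inner_diff_right inner_axis)

lemma qa_pool_score_gap_constant:
  assumes "exposure_function D s g" "\<forall>i<m. P i \<in> D" "qa_pool D g m P w pstar"
  shows "s pstar j - (\<Sum>i<m. w i * s (P i) j) = s pstar k - (\<Sum>i<m. w i * s (P i) k)"
proof -
  obtain c where c: "g pstar = (\<Sum>i<m. w i *\<^sub>R g (P i)) + c *\<^sub>R 1" and "pstar \<in> D"
    using assms(3) unfolding qa_pool_def by blast
  define B where "B i = expected_reward s (P i) - g (P i) \<bullet> P i" for i
  have gap: "s pstar l - (\<Sum>i<m. w i * s (P i) l)
      = expected_reward s pstar - g pstar \<bullet> pstar + c - (\<Sum>i<m. w i * B i)" for l
  proof -
    have "(\<Sum>i<m. w i * s (P i) l) = (\<Sum>i<m. w i * B i + w i * g (P i) $ l)"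
      using assms(2) exposure_score_eq[OF assms(1)] unfolding B_def
      by (intro sum.cong) (simp_all add: distrib_left)
    then have "(\<Sum>i<m. w i * s (P i) l) = (\<Sum>i<m. w i * B i) + (\<Sum>i<m. w i * g (P i) $ l)"
      by (simp add: sum.distrib)
    moreover have "s pstar l = expected_reward s pstar - g pstar \<bullet> pstar
        + (\<Sum>i<m. w i * g (P i) $ l) + c"
      using exposure_score_eq[OF assms(1) \<open>pstar \<in> D\<close>] by (simp add: c)
    ultimately show ?thesis by simp
  qed
  show ?thesis unfolding gap ..
qed

theorem theorem4p1:
  fixes D :: "(real^'n::finite) set"
    and s :: "real^'n \<Rightarrow> 'n \<Rightarrow> real"
    and g :: "real^'n \<Rightarrow> real^'n"
    and m :: nat and P :: "nat \<Rightarrow> real^'n" and w :: "nat \<Rightarrow> real"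
    and pstar :: "real^'n"
    and u :: "real^'n \<Rightarrow> 'n \<Rightarrow> real"
  assumes "forecast_domain D"
    and "proper_scoring_rule D s"
    and "continuous_scoring_rule D s"
    and "exposure_function D s g"
    and "convex_exposure D g"
    and "\<forall>i<m. P i \<in> D"
    and "\<forall>i<m. 0 \<le> w i"
    and "(\<Sum>i<m. w i) = 1"
    and u_def: "\<forall>p j. u p j = s p j - (\<Sum>i<m. w i * s (P i) j)"
    and "qa_pool D g m P w pstar"
  shows "(\<forall>p\<in>D. p \<noteq> pstar \<longrightarrow> Min (range (u p)) < Min (range (u pstar)))
    \<and> (\<forall>j k. u pstar j = u pstar k)
    \<and> (\<forall>j. 0 \<le> u pstar j)
    \<and> ((\<exists>i<m. \<exists>k<m. 0 < w i \<and> 0 < w k \<and> P i \<noteq> P k) \<longrightarrow> (\<forall>j. 0 < u pstar j))"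
proof -
  have pstar_D: "pstar \<in> D" and pstar_simplex: "pstar \<in> prob_simplex"
    using assms(1,10) unfolding qa_pool_def forecast_domain_def by auto
  have expectation_u: "(\<Sum>j\<in>UNIV. pstar $ j * u p j)
      = expected_score s pstar p - (\<Sum>i<m. w i * expected_score s pstar (P i))" for p
    using u_def expected_score_pool_gap by simp
  define K where "K = expected_score s pstar pstar - (\<Sum>i<m. w i * expected_score s pstar (P i))"
  have u_pstar: "u pstar j = K" for j
  proof -
    have "u pstar k = u pstar j" for k
      using qa_pool_score_gap_constant[OF assms(4,6,10)] by (simp only: u_def)
    then have "(\<Sum>k\<in>UNIV. pstar $ k * u pstar k) = (\<Sum>k\<in>UNIV. pstar $ k * u pstar j)"
      by (intro sum.cong) auto
    then have "(\<Sum>k\<in>UNIV. pstar $ k * u pstar k) = u pstar j"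
      using prob_simplex_sum_const[OF pstar_simplex] by simp
    then show ?thesis
      using expectation_u[of pstar] unfolding K_def by simp
  qed
  have "Min (range (u p)) < K" if "p \<in> D" "p \<noteq> pstar" for p
    using Min_range_le_expectation[OF pstar_simplex, of "u p"] expectation_u[of p]
      proper_scoring_rule_less[OF assms(2) pstar_D that] unfolding K_def by linarith
  moreover have "0 \<le> K"
    using weighted_expected_score_le[OF assms(2) pstar_D assms(6-8)] unfolding K_def by simp
  moreover have "0 < K" if "\<exists>i<m. \<exists>k<m. 0 < w i \<and> 0 < w k \<and> P i \<noteq> P k"
  proof -
    from that obtain k where "k < m" "0 < w k" "P k \<noteq> pstar" by metis
    from weighted_expected_score_less[OF assms(2) pstar_D assms(6-8) this]
    show ?thesis unfolding K_def by simp
  qed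
  ultimately show ?thesis by (simp add: u_pstar)
qed

end
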